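(* Let $\delta\in\mathcal D^0$ and let $C$ be an absolutely continuous copula with multidiagonal $\delta$ and density $c$. Then $c(u)\mathbf 1_{Z_\delta}(u)=0$ for a.e. $u\in I^d$, where $Z_\delta=\{u\in I^d:\ \delta'_{(i)}(u_{(i)})=0\text{ for some }1\le i\le d\}$.
   Context: $I=[0,1]$; $u_{(1)}\le\dots\le u_{(d)}$ denote the ordered coordinates of $u$. A copula is a cdf on $\mathbb R^d$ with uniform-on-$I$ coordinates. For a copula $C$ and $U\sim C$ with order statistics $U_{(i)}$, the multidiagonal is $(\delta_{(i)})$ with $\delta_{(i)}(t)=\mathbb P(U_{(i)}\le t)$; each $\delta_{(i)}$ is Lipschitz, hence differentiable a.e. $\mathcal D^0$ is the set of multidiagonals of absolutely continuous copulas. *)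

theory Defs
  imports "HOL-Probability.Probability" "HOL-Library.Multiset"
begin

text \<open>Points of R^d are vectors of type real^'d; d = CARD('d).
  Order statistics: ord_stat u i is the i-th smallest coordinate of u, for 1 \<le> i \<le> d.\<close>

definition ord_stat :: "real ^ 'd \<Rightarrow> nat \<Rightarrow> real" where
  "ord_stat u i = sorted_list_of_multiset (image_mset (\<lambda>k. u $ k) (mset_set (UNIV :: 'd set))) ! (i - 1)"

definition unit_cube :: "(real ^ 'd) set" where
  "unit_cube = {u. \<forall>k. 0 \<le> u $ k \<and> u $ k \<le> 1}"

definition copula_measure :: "(real ^ 'd \<Rightarrow> real) \<Rightarrow> (real ^ 'd) measure \<Rightarrow> bool" where
  "copula_measure C M \<longleftrightarrow> prob_space M \<and> sets M = sets borel \<and>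
     (\<forall>x. C x = measure M {u. \<forall>k. u $ k \<le> x $ k}) \<and>
     (\<forall>k t. measure M {u. u $ k \<le> t} = max 0 (min t 1))"

definition is_copula :: "(real ^ 'd \<Rightarrow> real) \<Rightarrow> bool" where
  "is_copula C \<longleftrightarrow> (\<exists>M. copula_measure C M)"

definition copula_density :: "(real ^ 'd \<Rightarrow> real) \<Rightarrow> (real ^ 'd \<Rightarrow> real) \<Rightarrow> bool" where
  "copula_density C c \<longleftrightarrow> c \<in> borel_measurable lborel \<and> (AE u in lborel. 0 \<le> c u) \<and>
     (\<forall>x. ennreal (C x) = (\<integral>\<^sup>+ u \<in> {u. \<forall>k. u $ k \<le> x $ k}. ennreal (c u) \<partial>lborel))"

definition is_multidiagonal :: "(real ^ 'd \<Rightarrow> real) \<Rightarrow> (nat \<Rightarrow> real \<Rightarrow> real) \<Rightarrow> bool" where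
  "is_multidiagonal C \<delta> \<longleftrightarrow> (\<exists>M. copula_measure C M \<and>
     (\<forall>i\<in>{1..CARD('d)}. \<forall>t. \<delta> i t = measure M {u. ord_stat u i \<le> t}))"

text \<open>Z_delta: points of I^d where some delta_(i) has derivative 0 at u_(i)
  (derivative taken where it exists; the non-differentiability set is null).\<close>
definition Z_set :: "(nat \<Rightarrow> real \<Rightarrow> real) \<Rightarrow> (real ^ 'd) set" where
  "Z_set \<delta> = {u \<in> unit_cube. \<exists>i\<in>{1..CARD('d)}. (\<delta> i has_real_derivative 0) (at (ord_stat u i))}"

end

theory Submission
  imports Defs
begin

text \<open>Each \<open>\<delta> i\<close> is the distribution function of an order statistic \<open>ord_stat U i\<close>, \<open>U \<sim> M\<close>.
  It is continuous, because \<open>ord_stat U i\<close> always equals one of the coordinates of \<open>U\<close>,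
  and these are atomless. For a real random variable \<open>X\<close> with continuous distribution
  function \<open>F\<close>, \<open>F X\<close> is uniform on \<open>[0,1]\<close>, while by the one-dimensional Sard lemma the
  critical values \<open>F ` {t. F' t = 0}\<close> form a Lebesgue null set; hence \<open>F' X \<noteq> 0\<close> almost
  surely. Applied to every order statistic this gives \<open>M (Z_set \<delta>) = 0\<close>, and since \<open>M\<close> has
  density \<open>c\<close>, \<open>c\<close> vanishes almost everywhere on \<open>Z_set \<delta>\<close>.\<close>

lemma sorted_nth_le_iff:
  fixes xs :: "'a::linorder list"
  assumes sorted: "sorted xs" and j: "j < length xs"
  shows "xs ! j \<le> t \<longleftrightarrow> j < length (filter (\<lambda>x. x \<le> t) xs)"
proof -
  have len: "length (filter (\<lambda>x. x \<le> t) xs) = card {k. k < length xs \<and> xs ! k \<le> t}"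
    by (simp add: length_filter_conv_card)
  show ?thesis
  proof
    assume "xs ! j \<le> t"
    then have "{..j} \<subseteq> {k. k < length xs \<and> xs ! k \<le> t}"
      using j sorted_nth_mono[OF sorted] by (auto intro: order_trans)
    from card_mono[OF _ this] show "j < length (filter (\<lambda>x. x \<le> t) xs)"
      by (simp add: len)
  next
    assume less: "j < length (filter (\<lambda>x. x \<le> t) xs)"
    show "xs ! j \<le> t"
    proof (rule ccontr)
      assume "\<not> xs ! j \<le> t"
      then have "{k. k < length xs \<and> xs ! k \<le> t} \<subseteq> {..<j}"
        using sorted_nth_mono[OF sorted, of j] by (auto simp: not_le) (meson le_less_trans linorder_not_le)
      from card_mono[OF _ this] show False
        using less len by simp
    qed
  qed
qed

lemma ord_stat_nth:
  fixes u :: "real ^ 'd"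
  obtains xs where "sorted xs" "mset xs = image_mset (\<lambda>k. u $ k) (mset_set UNIV)"
    "length xs = CARD('d)" "\<And>i. ord_stat u i = xs ! (i - 1)"
proof -
  define xs where "xs = sorted_list_of_multiset (image_mset (\<lambda>k. u $ k) (mset_set UNIV))"
  have "mset xs = image_mset (\<lambda>k. u $ k) (mset_set UNIV)"
    by (simp add: xs_def)
  moreover from arg_cong[OF this, of size] have "length xs = CARD('d)"
    by simp
  ultimately show thesis
    using that[of xs] by (simp add: xs_def ord_stat_def)
qed

lemma ord_stat_le_iff:
  fixes u :: "real ^ 'd"
  assumes "1 \<le> i" "i \<le> CARD('d)"
  shows "ord_stat u i \<le> t \<longleftrightarrow> i \<le> card {k. u $ k \<le> t}"
proof -
  obtain xs where xs: "sorted xs" "mset xs = image_mset (\<lambda>k. u $ k) (mset_set UNIV)"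
      "length xs = CARD('d)" "\<And>i. ord_stat u i = xs ! (i - 1)"
    using ord_stat_nth[of u] by blast
  have "length (filter (\<lambda>x. x \<le> t) xs) = card {k. u $ k \<le> t}"
    using arg_cong[OF xs(2), of "\<lambda>m. size (filter_mset (\<lambda>x. x \<le> t) m)"]
    by (simp add: filter_mset_image_mset filter_mset_mset_set flip: mset_filter)
  then have "ord_stat u i \<le> t \<longleftrightarrow> i - 1 < card {k. u $ k \<le> t}"
    using sorted_nth_le_iff[OF xs(1), of "i - 1" t] xs(3,4) assms by simp
  then show ?thesis
    using assms by arith
qed

lemma ord_stat_in_range:
  fixes u :: "real ^ 'd"
  assumes "1 \<le> i" "i \<le> CARD('d)"
  shows "ord_stat u i \<in> range (\<lambda>k. u $ k)"
proof -
  obtain xs where xs: "sorted xs" "mset xs = image_mset (\<lambda>k. u $ k) (mset_set UNIV)"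
      "length xs = CARD('d)" "\<And>i. ord_stat u i = xs ! (i - 1)"
    using ord_stat_nth[of u] by blast
  have "ord_stat u i \<in> set xs"
    using xs(3,4) assms by simp
  also have "set xs = range (\<lambda>k. u $ k)"
    using arg_cong[OF xs(2), of set_mset] by simp
  finally show ?thesis .
qed

lemma borel_measurable_ord_stat:
  assumes "1 \<le> i" "i \<le> CARD('d)"
  shows "(\<lambda>u::real ^ 'd. ord_stat u i) \<in> borel_measurable borel"
proof (subst borel_measurable_iff_le, intro allI)
  fix t
  have "(\<Sum>k\<in>UNIV. indicator {..t} (u $ k)) = real (card {k. u $ k \<le> t})" for u :: "real ^ 'd"
    using sum_indicator_eq_card[of UNIV "{k. u $ k \<le> t}"] by (simp add: indicator_def)
  then have eq: "{u \<in> space borel. ord_stat (u :: real ^ 'd) i \<le> t} =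
      {u::real ^ 'd. real i \<le> (\<Sum>k\<in>UNIV. indicator {..t} (u $ k))}"
    by (simp add: ord_stat_le_iff[OF assms])
  show "{u \<in> space borel. ord_stat (u :: real ^ 'd) i \<le> t} \<in> sets borel"
    unfolding eq by measurable
qed

lemma negligible_image_zero_derivative:
  fixes F :: "real \<Rightarrow> real"
  shows "negligible (F ` {t. (F has_real_derivative 0) (at t)})"
proof -
  define N where "N = {t. (F has_real_derivative 0) (at t)}"
  \<comment> \<open>Sard's lemma is stated for maps \<open>real ^ 'm \<Rightarrow> real ^ 'n\<close>, so transport \<open>F\<close> along \<open>vec\<close>.\<close>
  define G :: "real ^ 1 \<Rightarrow> real ^ 1" where "G = (\<lambda>x. vec (F (x $ 1)))"
  have "(G has_derivative (*\<^sub>R) 0) (at x within vec ` N)" if x: "x \<in> vec ` N" for x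
  proof -
    obtain a where a: "a \<in> N" "x = vec a"
      using x by auto
    then have "(F has_derivative (*) 0) (at a)"
      by (simp add: N_def has_field_derivative_def)
    then have "(F has_derivative (\<lambda>h. h * (\<lambda>_. 0) a)) (at a within N)"
      unfolding mult_commute_abs by (rule has_derivative_at_withinI)
    then show ?thesis
      unfolding G_def a(2) by (rule has_derivative_vector_1)
  qed
  moreover have "rank (matrix ((*\<^sub>R) 0 :: real ^ 1 \<Rightarrow> real ^ 1)) < CARD(1)"
    by (metis CARD_1 det_eq_0_rank det_matrix_scaleR power_one_right)
  ultimately have "negligible (G ` vec ` N)"
    by (intro baby_Sard) simp_all
  then have "negligible ((\<lambda>y. y $ 1) ` G ` vec ` N)"
    by (rule negligible_differentiable_image_negligible[rotated])
       (auto intro!: bounded_linear_imp_differentiable_on bounded_linear_vec_nth)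
  moreover have "(\<lambda>y. y $ 1) ` G ` vec ` N = F ` N"
    by (auto simp: G_def image_image)
  ultimately show ?thesis
    by (simp add: N_def)
qed

lemma continuous_cdf_sublevel_set:
  fixes F :: "real \<Rightarrow> real"
  assumes mono: "mono F" and cont: "continuous_on UNIV F"
    and bot: "(F \<longlongrightarrow> 0) at_bot" and top: "(F \<longlongrightarrow> 1) at_top"
    and p: "0 < p" "p < 1"
  obtains s where "F s = p" "{x. F x \<le> p} = {..s}"
proof -
  define S where "S = {x. F x \<le> p}"
  obtain t where "F t < p"
    using eventually_happens'[OF _ order_tendstoD(2)[OF bot p(1)]] by auto
  then have "S \<noteq> {}"
    by (auto simp: S_def intro: less_imp_le)
  obtain T where T: "F T > p"
    using eventually_happens'[OF _ order_tendstoD(1)[OF top p(2)]] by auto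
  have below_T: "x < T" if "x \<in> S" for x
    using that T monoD[OF mono, of T x] by (force simp: S_def)
  then have "bdd_above S"
    by (meson bdd_above.I less_imp_le)
  moreover have "closed S"
    unfolding S_def using closed_Collect_le[OF cont continuous_on_const] by simp
  ultimately have "Sup S \<in> S"
    using \<open>S \<noteq> {}\<close> closed_contains_Sup by blast
  have S_eq: "S = {..Sup S}"
    using \<open>Sup S \<in> S\<close> cSup_upper[OF _ \<open>bdd_above S\<close>] monoD[OF mono]
    by (force simp: S_def)
  obtain x where x: "Sup S \<le> x" "x \<le> T" "F x = p"
    using IVT'[of F "Sup S" p T] \<open>Sup S \<in> S\<close> T below_T[OF \<open>Sup S \<in> S\<close>]
      continuous_on_subset[OF cont]
    by (force simp: S_def)
  then have "x = Sup S"
    using S_eq by (force simp: S_def)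
  then show thesis
    using that x S_eq S_def by blast
qed

lemma (in prob_space) cdf_distr:
  fixes X :: "'a \<Rightarrow> real"
  assumes "X \<in> borel_measurable M"
  shows "cdf (distr M borel X) = (\<lambda>t. \<P>(u in M. X u \<le> t))"
  using assms by (simp add: fun_eq_iff cdf_def measure_distr vimage_def Int_def conj_commute)

lemma (in prob_space) isCont_cdf_iff_prob_eq_0:
  fixes X :: "'a \<Rightarrow> real"
  assumes X: "X \<in> borel_measurable M"
  shows "isCont (\<lambda>t. \<P>(u in M. X u \<le> t)) x \<longleftrightarrow> \<P>(u in M. X u = x) = 0"
proof -
  interpret D: real_distribution "distr M borel X"
    using X by simp
  have "measure (distr M borel X) {x} = \<P>(u in M. X u = x)"
    using X by (simp add: measure_distr vimage_def Int_def conj_commute)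
  then show ?thesis
    using D.isCont_cdf[of x] by (simp add: cdf_distr[OF X])
qed

lemma (in prob_space) uniform_distributed_cdf_comp:
  fixes X :: "'a \<Rightarrow> real"
  assumes X[measurable]: "X \<in> borel_measurable M"
    and F: "\<And>t. F t = \<P>(u in M. X u \<le> t)"
    and cont: "continuous_on UNIV F"
  shows "distributed M lborel (\<lambda>u. F (X u)) (\<lambda>x. indicator {0..1} x / measure lborel {0..1::real})"
proof -
  interpret D: real_distribution "distr M borel X"
    using X by simp
  have cdf_eq: "cdf (distr M borel X) = F"
    using F by (simp add: fun_eq_iff cdf_distr[OF X])
  have mono: "mono F"
    using D.cdf_nondecreasing unfolding cdf_eq by (rule monoI)
  have F_le_1: "F x \<le> 1" for x
    using D.cdf_bounded_prob unfolding cdf_eq .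
  have [measurable]: "F \<in> borel_measurable borel"
    by (rule borel_measurable_mono[OF mono])
  have interior: "\<P>(u in M. F (X u) \<le> t) = t" if t: "0 < t" "t < 1" for t
  proof -
    obtain s where "F s = t" "{x. F x \<le> t} = {..s}"
      using continuous_cdf_sublevel_set[OF mono cont _ _ t] D.cdf_lim_at_bot D.cdf_lim_at_top_prob
      unfolding cdf_eq by blast
    then show ?thesis
      by (auto simp: F set_eq_iff)
  qed
  have zero: "\<P>(u in M. F (X u) \<le> 0) \<le> e" if "0 < e" for e
  proof (cases "e < 1")
    case True
    have "\<P>(u in M. F (X u) \<le> 0) \<le> \<P>(u in M. F (X u) \<le> e)"
      using that by (intro finite_measure_mono) auto
    then show ?thesis
      using interior[OF that True] by simp
  next
    case False
    then show ?thesis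
      using prob_le_1[of "{u \<in> space M. F (X u) \<le> 0}"] by linarith
  qed
  show ?thesis
  proof (rule uniform_distrI_borel_atLeastAtMost)
    fix t :: real
    assume "0 \<le> t" "t \<le> 1"
    then consider "t = 0" | "0 < t" "t < 1" | "t = 1"
      by linarith
    then show "\<P>(u in M. F (X u) \<le> t) = (t - 0) / (1 - 0)"
    proof cases
      case 1
      have "\<P>(u in M. F (X u) \<le> 0) \<le> 0"
        by (rule field_le_epsilon) (simp add: zero)
      moreover have "0 \<le> \<P>(u in M. F (X u) \<le> 0)"
        by (rule measure_nonneg)
      ultimately show ?thesis
        using 1 by simp
    next
      case 3
      then show ?thesis
        using F_le_1 prob_space by simp
    qed (simp add: interior)
  qed simp_all
qed

lemma (in prob_space) AE_not_has_real_derivative_zero_cdf: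
  fixes X :: "'a \<Rightarrow> real"
  assumes X: "X \<in> borel_measurable M"
    and F: "\<And>t. F t = \<P>(u in M. X u \<le> t)"
    and cont: "continuous_on UNIV F"
  shows "AE u in M. \<not> (F has_real_derivative 0) (at (X u))"
proof -
  obtain B where B: "B \<in> null_sets lborel" "F ` {t. (F has_real_derivative 0) (at t)} \<subseteq> B"
    using negligible_image_zero_derivative[of F]
    unfolding negligible_iff_null_sets null_sets_completion_iff2 by blast
  note uniform = uniform_distributed_cdf_comp[OF X F cont]
  have "emeasure M ((\<lambda>u. F (X u)) -` B \<inter> space M) = 0"
    unfolding distributed_emeasure[OF uniform null_setsD2[OF B(1)]]
    by (rule nn_integral_null_set[OF B(1)])
  then have "(\<lambda>u. F (X u)) -` B \<inter> space M \<in> null_sets M"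
    using measurable_sets[OF distributed_measurable[OF uniform], of B] B(1)
    by (auto simp: null_sets_def)
  then show ?thesis
    by (rule AE_I') (use B(2) in auto)
qed

lemma measure_eqI_atMost:
  fixes M N :: "'a::ordered_euclidean_space measure"
  assumes sets: "sets M = sets borel" "sets N = sets borel"
    and fin: "\<And>x. emeasure M {..x} \<noteq> \<infinity>"
    and eq: "\<And>x. emeasure M {..x} = emeasure N {..x}"
  shows "M = N"
proof (rule measure_eqI_generator_eq[where \<Omega>=UNIV and E="range atMost" and A="\<lambda>n. {..real n *\<^sub>R One}"])
  have "{..a} \<inter> {..b} = {..inf a b}" for a b :: 'a
    by auto
  then show "Int_stable (range atMost :: 'a set set)"
    by (auto simp: Int_stable_def)
  show "sets M = sigma_sets UNIV (range atMost)" "sets N = sigma_sets UNIV (range atMost)"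
    unfolding sets by (subst borel_eq_atMost; simp)+
  show "(\<Union>n. {..real n *\<^sub>R One}) = (UNIV :: 'a set)"
  proof (intro set_eqI iffI UNIV_I)
    fix u :: 'a
    obtain n :: nat where n: "norm u \<le> real n"
      using real_arch_simple by blast
    have "u \<bullet> b \<le> real n" if "b \<in> Basis" for b
      using abs_le_D1[OF Basis_le_norm[of b u, OF that]] n by linarith
    then have "u \<le> real n *\<^sub>R One"
      by (simp add: eucl_le[where 'a='a])
    then show "u \<in> (\<Union>n. {..real n *\<^sub>R One})"
      by auto
  qed
qed (use eq fin in auto)

lemma
  assumes "copula_measure C M"
  shows copula_measure_prob_space: "prob_space M"
    and sets_copula_measure: "sets M = sets borel"
    and space_copula_measure: "space M = UNIV"
  using assms unfolding copula_measure_def by (auto dest: sets_eq_imp_space_eq)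

lemma borel_measurable_copula_measure:
  "copula_measure C M \<Longrightarrow> borel_measurable M = borel_measurable borel"
  by (rule measurable_cong_sets[OF sets_copula_measure refl])

lemma copula_measure_eq_density:
  fixes M :: "(real ^ 'd) measure"
  assumes cm: "copula_measure C M" and density: "copula_density C c"
  shows "M = density lborel (\<lambda>u. ennreal (c u))"
proof (rule measure_eqI_atMost)
  interpret prob_space M
    by (rule copula_measure_prob_space[OF cm])
  fix x :: "real ^ 'd"
  have atMost_eq: "{..x} = {u. \<forall>k. u $ k \<le> x $ k}"
    by (auto simp: less_eq_vec_def)
  have "emeasure M {..x} = ennreal (C x)"
    using cm by (simp add: emeasure_eq_measure copula_measure_def atMost_eq)
  also have "\<dots> = (\<integral>\<^sup>+u\<in>{..x}. ennreal (c u) \<partial>lborel)"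
    using density by (simp add: copula_density_def atMost_eq)
  also have "\<dots> = emeasure (density lborel (\<lambda>u. ennreal (c u))) {..x}"
    using density by (subst emeasure_density) (auto simp: copula_density_def)
  finally show "emeasure M {..x} = emeasure (density lborel (\<lambda>u. ennreal (c u))) {..x}" .
  show "emeasure M {..x} \<noteq> \<infinity>"
    by (simp add: emeasure_eq_measure)
qed (simp_all only: sets_copula_measure[OF cm] sets_density sets_lborel)

lemma copula_measure_coordinate_atom:
  fixes M :: "(real ^ 'd) measure"
  assumes cm: "copula_measure C M"
  shows "measure M {u. u $ k = x} = 0"
proof -
  interpret prob_space M
    by (rule copula_measure_prob_space[OF cm])
  have X: "(\<lambda>u. u $ k) \<in> borel_measurable M"
    by (simp add: borel_measurable_copula_measure[OF cm])
  have "(\<lambda>t. \<P>(u in M. u $ k \<le> t)) = (\<lambda>t. max 0 (min t 1))"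
    using cm by (simp add: copula_measure_def space_copula_measure[OF cm])
  then have "isCont (\<lambda>t. \<P>(u in M. u $ k \<le> t)) x"
    by (simp only:) (intro continuous_intros)
  then have "\<P>(u in M. u $ k = x) = 0"
    using isCont_cdf_iff_prob_eq_0[OF X] by blast
  then show ?thesis
    by (simp add: space_copula_measure[OF cm])
qed

lemma copula_measure_ord_stat_atom:
  fixes M :: "(real ^ 'd) measure"
  assumes cm: "copula_measure C M" and i: "1 \<le> i" "i \<le> CARD('d)"
  shows "measure M {u. ord_stat u i = x} = 0"
proof -
  interpret prob_space M
    by (rule copula_measure_prob_space[OF cm])
  have "(\<lambda>u. u $ k) -` {x} \<inter> space M \<in> sets M" for k
    by (rule measurable_sets[of _ _ borel]) (simp_all add: borel_measurable_copula_measure[OF cm])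
  then have coordinate_sets: "{u. u $ k = x} \<in> sets M" for k
    by (simp add: space_copula_measure[OF cm] vimage_def)
  have "{u :: real ^ 'd. ord_stat u i = x} \<subseteq> (\<Union>k. {u. u $ k = x})"
  proof
    fix u :: "real ^ 'd"
    assume "u \<in> {u. ord_stat u i = x}"
    moreover obtain k where "ord_stat u i = u $ k"
      using ord_stat_in_range[OF i, of u] by blast
    ultimately have "u $ k = x"
      by simp
    then show "u \<in> (\<Union>k. {u. u $ k = x})"
      by blast
  qed
  then have "measure M {u. ord_stat u i = x} \<le> measure M (\<Union>k. {u. u $ k = x})"
    using coordinate_sets by (intro finite_measure_mono sets.finite_UN) auto
  also have "\<dots> \<le> (\<Sum>k\<in>UNIV. measure M {u. u $ k = x})"
    using coordinate_sets by (rule measure_UNION_le[rotated]) simp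
  also have "\<dots> = 0"
    by (simp add: copula_measure_coordinate_atom[OF cm])
  finally show ?thesis
    using measure_nonneg[of M] by (simp add: order_antisym)
qed

lemma continuous_on_ord_stat_cdf:
  fixes M :: "(real ^ 'd) measure"
  assumes cm: "copula_measure C M" and i: "1 \<le> i" "i \<le> CARD('d)"
  shows "continuous_on UNIV (\<lambda>t. measure M {u. ord_stat u i \<le> t})"
proof -
  interpret prob_space M
    by (rule copula_measure_prob_space[OF cm])
  have prob_eq: "\<P>(u in M. P u) = measure M {u. P u}" for P
    by (simp add: space_copula_measure[OF cm])
  have X: "(\<lambda>u. ord_stat u i) \<in> borel_measurable M"
    using borel_measurable_ord_stat[OF i] by (simp add: borel_measurable_copula_measure[OF cm])
  have "isCont (\<lambda>t. \<P>(u in M. ord_stat u i \<le> t)) x" for x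
    using isCont_cdf_iff_prob_eq_0[OF X] copula_measure_ord_stat_atom[OF cm i] by (simp add: prob_eq)
  then show ?thesis
    by (simp add: continuous_at_imp_continuous_on prob_eq)
qed

lemma AE_copula_measure_not_in_Z_set:
  fixes M :: "(real ^ 'd) measure"
  assumes cm: "copula_measure C M"
    and \<delta>: "\<And>i t. i \<in> {1..CARD('d)} \<Longrightarrow> \<delta> i t = measure M {u. ord_stat u i \<le> t}"
  shows "AE u in M. u \<notin> Z_set \<delta>"
proof -
  interpret prob_space M
    by (rule copula_measure_prob_space[OF cm])
  have derivative_nonzero: "AE u in M. \<not> (\<delta> i has_real_derivative 0) (at (ord_stat u i))"
    if i: "i \<in> {1..CARD('d)}" for i
  proof (rule AE_not_has_real_derivative_zero_cdf)
    show "(\<lambda>u. ord_stat u i) \<in> borel_measurable M"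
      using i by (simp add: borel_measurable_copula_measure[OF cm] borel_measurable_ord_stat)
    show "\<delta> i t = \<P>(u in M. ord_stat u i \<le> t)" for t
      using \<delta>[OF i] by (simp add: space_copula_measure[OF cm])
    have "\<delta> i = (\<lambda>t. measure M {u. ord_stat u i \<le> t})"
      using \<delta>[OF i] by (simp add: fun_eq_iff)
    then show "continuous_on UNIV (\<delta> i)"
      using continuous_on_ord_stat_cdf[OF cm] i by simp
  qed
  have "AE u in M. \<forall>i\<in>{1..CARD('d)}. \<not> (\<delta> i has_real_derivative 0) (at (ord_stat u i))"
    by (rule AE_finite_allI[OF finite_atLeastAtMost derivative_nonzero])
  then show ?thesis
    by eventually_elim (auto simp: Z_set_def)
qed

theorem mainTheorem16:
  fixes C :: "real ^ 'd \<Rightarrow> real" and c :: "real ^ 'd \<Rightarrow> real" and \<delta> :: "nat \<Rightarrow> real \<Rightarrow> real"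
  assumes "is_copula C"
    and "copula_density C c"
    and "is_multidiagonal C \<delta>"
  shows "AE u in lborel. u \<in> unit_cube \<longrightarrow> c u * indicator (Z_set \<delta>) u = 0"
proof -
  obtain M where cm: "copula_measure C M"
    and \<delta>: "\<forall>i\<in>{1..CARD('d)}. \<forall>t. \<delta> i t = measure M {u. ord_stat u i \<le> t}"
    using assms(3) unfolding is_multidiagonal_def by blast
  have "AE u in M. u \<notin> Z_set \<delta>"
    by (rule AE_copula_measure_not_in_Z_set[OF cm]) (use \<delta> in blast)
  then have "AE u in density lborel (\<lambda>u. ennreal (c u)). u \<notin> Z_set \<delta>"
    unfolding copula_measure_eq_density[OF cm assms(2)] .
  then have "AE u in lborel. 0 < ennreal (c u) \<longrightarrow> u \<notin> Z_set \<delta>"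
    using assms(2) by (subst (asm) AE_density) (auto simp: copula_density_def)
  moreover have "AE u in lborel. 0 \<le> c u"
    using assms(2) by (simp add: copula_density_def)
  ultimately show ?thesis
    by eventually_elim (auto simp: indicator_def)
qed

end
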